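(* Let $r\ge 1$ and let $M=(v_1,\dots,v_n)$ be a finite list (repetitions allowed) of nonzero vectors of $\mathbb{F}_2^r$ that generate $\mathbb{F}_2^r$, and suppose $M$ is generic, i.e. $\sum_{i=1}^n v_i\neq \mathbf{0}$ in $\mathbb{F}_2^r$. Then the number of cyclic factors in the invariant factor decomposition of the Sylow-$2$ subgroup of the sandpile group $K(G(\mathbb{F}_2^r,M))$ (equivalently, $\dim_{\mathbb{F}_2} K(G(\mathbb{F}_2^r,M))\otimes \mathbb{Z}/2\mathbb{Z}$) is $2^{r-1}-1$.
   Context: The Cayley graph $G=G(\mathbb{F}_2^r,M)$ has vertex set $\mathbb{F}_2^r$; its Laplacian $L(G)$ is the $2^r\times 2^r$ integer matrix indexed by $\mathbb{F}_2^r$ with $L(G)_{u,u}=n$ and $L(G)_{u,w}=-\#\{i: u+v_i=w\}$ for $u\neq w$. Since $M$ generates, $G$ is connected and $\operatorname{coker}(L(G):\mathbb{Z}^{2^r}\to\mathbb{Z}^{2^r})\cong \mathbb{Z}\oplus K(G)$ with $K(G)$ a finite abelian group, called the sandpile group of $G$. *)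

theory Defs
  imports "HOL-Algebra.Coset"
begin

text \<open>Vectors of F_2^r are represented as boolean lists of length r;
  addition is componentwise exclusive or.\<close>

definition f2vecs :: "nat \<Rightarrow> bool list set" where
  "f2vecs r = {v. length v = r}"

definition f2zero :: "nat \<Rightarrow> bool list" where
  "f2zero r = replicate r False"

definition f2add :: "bool list \<Rightarrow> bool list \<Rightarrow> bool list" where
  "f2add u w = map2 (\<lambda>a b. a \<noteq> b) u w"

definition f2sum :: "nat \<Rightarrow> bool list list \<Rightarrow> bool list" where
  "f2sum r xs = foldr f2add xs (f2zero r)"

definition f2generates :: "nat \<Rightarrow> bool list list \<Rightarrow> bool" where
  "f2generates r M \<longleftrightarrow>
     (\<forall>w \<in> f2vecs r. \<exists>S \<subseteq> {..<length M}. f2sum r (map (\<lambda>i. M ! i) (filter (\<lambda>i. i \<in> S) [0..<length M])) = w)"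

definition cayley_laplacian :: "bool list list \<Rightarrow> bool list \<Rightarrow> bool list \<Rightarrow> int" where
  "cayley_laplacian M u w =
     (if u = w then int (length M)
      else - int (card {i. i < length M \<and> f2add u (M ! i) = w}))"

text \<open>The free abelian group Z^V (V finite), as a multiplicative HOL-Algebra group.\<close>
definition free_ab :: "'a set \<Rightarrow> ('a \<Rightarrow> int) monoid" where
  "free_ab V = \<lparr>carrier = {f. \<forall>x. x \<notin> V \<longrightarrow> f x = 0},
                mult = (\<lambda>f g x. f x + g x), one = (\<lambda>_. 0)\<rparr>"

definition mat_image :: "'a set \<Rightarrow> ('a \<Rightarrow> 'a \<Rightarrow> int) \<Rightarrow> ('a \<Rightarrow> int) set" where
  "mat_image V L = {(\<lambda>u. if u \<in> V then (\<Sum>w\<in>V. L u w * c w) else 0) | c. c \<in> carrier (free_ab V)}"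

definition coker :: "'a set \<Rightarrow> ('a \<Rightarrow> 'a \<Rightarrow> int) \<Rightarrow> ('a \<Rightarrow> int) set monoid" where
  "coker V L = free_ab V Mod mat_image V L"

definition torsion_part :: "('b, 'c) monoid_scheme \<Rightarrow> ('b, 'c) monoid_scheme" where
  "torsion_part H = H\<lparr>carrier := {a \<in> carrier H. \<exists>k::nat. k > 0 \<and> a [^]\<^bsub>H\<^esub> k = \<one>\<^bsub>H\<^esub>}\<rparr>"

definition sandpile_group :: "nat \<Rightarrow> bool list list \<Rightarrow> (bool list \<Rightarrow> int) set monoid" where
  "sandpile_group r M = torsion_part (coker (f2vecs r) (cayley_laplacian M))"

text \<open>K \<otimes> Z/2Z, realised as K / 2K.\<close>
definition mod_two :: "('b, 'c) monoid_scheme \<Rightarrow> 'b set monoid" where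
  "mod_two H = H Mod {a \<otimes>\<^bsub>H\<^esub> a | a. a \<in> carrier H}"

end

theory Submission
  imports Defs
begin

text \<open>The characters \<open>\<chi>\<^sub>s(u) = (-1)\<^bsup>s\<cdot>u\<^esup>\<close> of \<open>F\<^sub>2\<^sup>r\<close> diagonalise the Laplacian \<open>L\<close>
  with eigenvalues \<open>\<lambda>\<^sub>s = \<Sum>\<^sub>i (1 - \<chi>\<^sub>s(v\<^sub>i))\<close>, and \<open>\<lambda>\<^sub>s > 0\<close> for \<open>s \<noteq> 0\<close> because
  \<open>M\<close> generates. Hence the image of \<open>L\<close> has finite index in the lattice \<open>D\<close> of
  degree-zero vectors, \<open>K = D / L(\<int>\<^sup>V)\<close>, and reduction mod 2 gives
  \<open>K / 2K \<cong> D\<^sub>2 / L\<^sub>2(F\<^sub>2\<^sup>V)\<close>, where \<open>D\<^sub>2\<close> (the even-weight vectors) has order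
  \<open>2\<^bsup>2\<^sup>r - 1\<^esup>\<close> and \<open>L\<^sub>2\<close> is \<open>L\<close> mod 2.

  Over \<open>F\<^sub>2\<close> we have \<open>L\<^sub>2\<^sup>2 = (n\<^sup>2 + n) I = 0\<close>, so \<open>im L\<^sub>2 \<subseteq> ker L\<^sub>2\<close>. Genericity
  yields a coordinate \<open>j\<close> such that an odd number of the \<open>v\<^sub>i\<close> have \<open>v\<^sub>i(j) = 1\<close>;
  a double-counting argument then shows that no nonzero vector supported on the
  hyperplane \<open>H = {u. u(j) = 0}\<close> lies in \<open>ker L\<^sub>2\<close>. So \<open>L\<^sub>2\<close> is injective on \<open>F\<^sub>2\<^sup>H\<close> and
  \<open>ker L\<^sub>2\<close> embeds into \<open>F\<^sub>2\<^bsup>V - H\<^esup>\<close>, which forces \<open>rank L\<^sub>2 = |H| = 2\<^bsup>r-1\<^esup>\<close>.\<close>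

lemma length_f2add [simp]: "length (f2add u w) = min (length u) (length w)"
  by (simp add: f2add_def)

lemma f2add_nth [simp]: "i < length u \<Longrightarrow> i < length w \<Longrightarrow> f2add u w ! i = (u ! i \<noteq> w ! i)"
  by (simp add: f2add_def)

lemma f2vecs_iff [simp]: "v \<in> f2vecs r \<longleftrightarrow> length v = r"
  by (simp add: f2vecs_def)

lemma length_f2zero [simp]: "length (f2zero r) = r"
  by (simp add: f2zero_def)

lemma f2zero_nth [simp]: "i < r \<Longrightarrow> f2zero r ! i = False"
  by (simp add: f2zero_def)

lemma f2add_right_commute:
  "length z = r \<Longrightarrow> length a = r \<Longrightarrow> length b = r \<Longrightarrow> f2add (f2add z a) b = f2add (f2add z b) a"
  by (rule nth_equalityI) auto

lemma f2add_cancel_right: "length u = r \<Longrightarrow> length w = r \<Longrightarrow> f2add (f2add u w) w = u"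
  by (rule nth_equalityI) auto

lemma f2add_eq_zero_iff: "length u = r \<Longrightarrow> length w = r \<Longrightarrow> f2add u w = f2zero r \<longleftrightarrow> u = w"
proof
  assume len: "length u = r" "length w = r" and sum: "f2add u w = f2zero r"
  show "u = w"
  proof (rule nth_equalityI)
    fix i assume "i < length u"
    then have "f2add u w ! i = f2zero r ! i" using sum by simp
    then show "u ! i = w ! i" using \<open>i < length u\<close> len by auto
  qed (use len in simp)
qed (auto intro: nth_equalityI)

lemma f2add_eq_self_iff: "length u = r \<Longrightarrow> length w = r \<Longrightarrow> f2add u w = u \<longleftrightarrow> w = f2zero r"
proof
  assume len: "length u = r" "length w = r" and sum: "f2add u w = u"
  show "w = f2zero r"
  proof (rule nth_equalityI)
    fix i assume "i < length w"
    then have "(u ! i \<noteq> w ! i) = u ! i" using len sum f2add_nth[of i u w] by metis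
    then show "w ! i = f2zero r ! i" using len \<open>i < length w\<close> by auto
  qed (use len in simp)
qed (auto intro: nth_equalityI)

lemma f2vecs_eq_lists: "f2vecs r = {xs. set xs \<subseteq> (UNIV :: bool set) \<and> length xs = r}"
  by auto

lemma finite_f2vecs [simp]: "finite (f2vecs r)"
  unfolding f2vecs_eq_lists by (rule finite_lists_length_eq) simp

lemma card_f2vecs: "card (f2vecs r) = 2 ^ r"
  using card_lists_length_eq[of "UNIV :: bool set" r] by (simp only: f2vecs_eq_lists) simp

lemma sum_f2add_shift: "length v = r \<Longrightarrow> (\<Sum>u\<in>f2vecs r. g (f2add u v)) = (\<Sum>u\<in>f2vecs r. g u)"
  by (rule sum.reindex_bij_witness[where i = "\<lambda>u. f2add u v" and j = "\<lambda>u. f2add u v"])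
     (auto simp: f2add_cancel_right)

definition unit_vec :: "nat \<Rightarrow> nat \<Rightarrow> bool list" where
  "unit_vec r j = (f2zero r)[j := True]"

lemma length_unit_vec [simp]: "length (unit_vec r j) = r"
  by (simp add: unit_vec_def)

lemma ex_nth_if_nonzero: "length u = r \<Longrightarrow> u \<noteq> f2zero r \<Longrightarrow> \<exists>j<r. u ! j"
  by (rule ccontr) (auto intro: nth_equalityI)

lemma length_f2sum: "\<forall>x\<in>set xs. length x = r \<Longrightarrow> length (f2sum r xs) = r"
  by (induction xs) (simp_all add: f2sum_def)

lemma f2sum_nth:
  assumes "\<forall>x\<in>set xs. length x = r" "j < r"
  shows "f2sum r xs ! j = odd (\<Sum>i<length xs. (of_bool (xs ! i ! j) :: int))"
  using assms(1)
proof (induction xs)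
  case (Cons a xs)
  have "(\<Sum>i<length (a # xs). (of_bool ((a # xs) ! i ! j) :: int))
      = of_bool (a ! j) + (\<Sum>i<length xs. of_bool (xs ! i ! j))"
    unfolding length_Cons sum.lessThan_Suc_shift by simp
  then show ?case
    using Cons assms(2) length_f2sum[of xs r] by (simp add: f2sum_def)
qed (use assms(2) in \<open>simp add: f2sum_def\<close>)

lemma odd_iff_odd_neq_odd: "even ((x::int) - y - z) \<Longrightarrow> odd x \<longleftrightarrow> (odd y \<noteq> odd z)"
  by (metis diff_diff_eq even_add even_diff)

lemma even_double_sum_minus_diagonal:
  fixes f :: "'a \<Rightarrow> 'a \<Rightarrow> int"
  assumes "finite J" "\<And>i k. i \<in> J \<Longrightarrow> k \<in> J \<Longrightarrow> f i k = f k i"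
  shows "even ((\<Sum>i\<in>J. \<Sum>k\<in>J. f i k) - (\<Sum>i\<in>J. f i i))"
  using assms
proof (induction J rule: finite_induct)
  case (insert a J)
  have "(\<Sum>i\<in>J. f i a) = (\<Sum>k\<in>J. f a k)"
    by (rule sum.cong) (simp_all add: insert.prems)
  then have "(\<Sum>i\<in>insert a J. \<Sum>k\<in>insert a J. f i k) - (\<Sum>i\<in>insert a J. f i i)
      = ((\<Sum>i\<in>J. \<Sum>k\<in>J. f i k) - (\<Sum>i\<in>J. f i i)) + 2 * (\<Sum>k\<in>J. f a k)"
    using insert.hyps by (simp add: sum.distrib)
  then show ?case using insert by simp
qed simp

lemma odd_sum_iff_odd_card:
  assumes "finite V"
  shows "odd (\<Sum>u\<in>V. (x u :: int)) \<longleftrightarrow> odd (card {u \<in> V. odd (x u)})"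
proof -
  have "even ((\<Sum>u\<in>V. (of_bool (odd (x u)) :: int)) - (\<Sum>u\<in>V. x u))"
    unfolding sum_subtractf[symmetric] by (rule dvd_sum) auto
  moreover have "(\<Sum>u\<in>V. (of_bool (odd (x u)) :: int)) = int (card {u \<in> V. odd (x u)})"
    using assms by (simp add: Collect_conj_eq Int_commute)
  ultimately show ?thesis by simp
qed

lemma even_card_sym_diff_iff:
  assumes "finite S" "finite S'"
  shows "even (card (sym_diff S S')) \<longleftrightarrow> (even (card S) \<longleftrightarrow> even (card S'))"
proof -
  have "sym_diff S S' = (S \<union> S') - (S \<inter> S')" by auto
  then have "card (sym_diff S S') + card (S \<inter> S') = card (S \<union> S')"
    using assms by (simp add: card_Diff_subset card_mono le_supI1)
  moreover have "card (S \<union> S') + card (S \<inter> S') = card S + card S'"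
    using card_Un_Int[OF assms] by simp
  ultimately have "card (sym_diff S S') + 2 * card (S \<inter> S') = card S + card S'" by simp
  then show ?thesis by (metis dvd_triv_left even_add)
qed

section \<open>Characters of \<open>F\<^sub>2\<^sup>r\<close>\<close>

definition f2dot :: "bool list \<Rightarrow> bool list \<Rightarrow> bool" where
  "f2dot s u = odd (\<Sum>k<length s. (of_bool (s ! k \<and> u ! k) :: int))"

definition chi :: "bool list \<Rightarrow> bool list \<Rightarrow> int" where
  "chi s u = (if f2dot s u then -1 else 1)"

lemma f2dot_f2add_right:
  assumes "length s = r" "length u = r" "length w = r"
  shows "f2dot s (f2add u w) = (f2dot s u \<noteq> f2dot s w)"
proof -
  have "even ((\<Sum>k<r. (of_bool (s ! k \<and> f2add u w ! k) :: int))
     - (\<Sum>k<r. of_bool (s ! k \<and> u ! k)) - (\<Sum>k<r. of_bool (s ! k \<and> w ! k)))"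
    unfolding sum_subtractf[symmetric] by (rule dvd_sum) (use assms in auto)
  then have "odd (\<Sum>k<r. (of_bool (s ! k \<and> f2add u w ! k) :: int)) \<longleftrightarrow>
     (odd (\<Sum>k<r. (of_bool (s ! k \<and> u ! k) :: int)) \<noteq> odd (\<Sum>k<r. (of_bool (s ! k \<and> w ! k) :: int)))"
    by (rule odd_iff_odd_neq_odd)
  then show ?thesis
    unfolding f2dot_def using assms by simp
qed

lemma f2dot_commute: "length s = length u \<Longrightarrow> f2dot s u = f2dot u s"
  unfolding f2dot_def by (simp add: conj_commute)

lemma f2dot_f2zero_right: "length s = r \<Longrightarrow> \<not> f2dot s (f2zero r)"
  unfolding f2dot_def by simp

lemma f2dot_f2zero_left: "\<not> f2dot (f2zero r) u"
  unfolding f2dot_def by simp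

lemma f2dot_unit_vec:
  assumes "j < r" "length u = r"
  shows "f2dot (unit_vec r j) u = u ! j"
proof -
  have "(\<Sum>k<r. (of_bool (unit_vec r j ! k \<and> u ! k) :: int)) = (\<Sum>k<r. if k = j then of_bool (u ! j) else 0)"
    by (rule sum.cong) (use assms in \<open>auto simp: unit_vec_def nth_list_update\<close>)
  then show ?thesis
    using assms by (simp add: f2dot_def)
qed

lemma not_f2dot_f2sum:
  assumes "length s = r" "\<forall>x\<in>set xs. length x = r \<and> \<not> f2dot s x"
  shows "\<not> f2dot s (f2sum r xs)"
  using assms(2)
proof (induction xs)
  case (Cons x xs)
  then show ?case
    using assms(1) length_f2sum[of xs r] by (simp add: f2sum_def f2dot_f2add_right)
qed (use assms(1) in \<open>simp add: f2sum_def f2dot_f2zero_right\<close>)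

lemma chi_f2add_right:
  "length s = r \<Longrightarrow> length u = r \<Longrightarrow> length w = r \<Longrightarrow> chi s (f2add u w) = chi s u * chi s w"
  by (simp add: chi_def f2dot_f2add_right)

lemma chi_f2add_left:
  "length s = r \<Longrightarrow> length t = r \<Longrightarrow> length u = r \<Longrightarrow> chi (f2add s t) u = chi s u * chi t u"
  using chi_f2add_right[of u r s t] by (simp add: chi_def f2dot_commute)

lemma sum_chi:
  assumes "length u = r"
  shows "(\<Sum>s\<in>f2vecs r. chi s u) = (if u = f2zero r then 2 ^ r else 0)"
proof (cases "u = f2zero r")
  case True
  then show ?thesis
    by (simp add: chi_def f2dot_f2zero_right card_f2vecs)
next
  case False
  then obtain j where j: "j < r" "u ! j"
    using ex_nth_if_nonzero assms by blast
  have "(\<Sum>s\<in>f2vecs r. chi s u) = (\<Sum>s\<in>f2vecs r. chi (f2add s (unit_vec r j)) u)"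
    by (rule sum_f2add_shift[symmetric]) simp
  also have "\<dots> = (\<Sum>s\<in>f2vecs r. chi s u * chi (unit_vec r j) u)"
    by (rule sum.cong) (use assms in \<open>auto simp: chi_f2add_left\<close>)
  also have "\<dots> = - (\<Sum>s\<in>f2vecs r. chi s u)"
    using j assms by (simp add: chi_def f2dot_unit_vec sum_negf)
  finally show ?thesis
    using False by simp
qed

lemma character_inversion:
  assumes "length u = r"
  shows "(\<Sum>s\<in>f2vecs r. (\<Sum>w\<in>f2vecs r. chi s w * x w) * chi s u) = 2 ^ r * x u"
proof -
  have "(\<Sum>s\<in>f2vecs r. (\<Sum>w\<in>f2vecs r. chi s w * x w) * chi s u)
      = (\<Sum>s\<in>f2vecs r. \<Sum>w\<in>f2vecs r. x w * chi s (f2add w u))"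
    by (rule sum.cong) (use assms in \<open>auto simp: sum_distrib_right chi_f2add_right intro!: sum.cong\<close>)
  also have "\<dots> = (\<Sum>w\<in>f2vecs r. x w * (\<Sum>s\<in>f2vecs r. chi s (f2add w u)))"
    by (subst sum.swap) (simp add: sum_distrib_left)
  also have "\<dots> = (\<Sum>w\<in>f2vecs r. if w = u then 2 ^ r * x u else 0)"
    by (rule sum.cong) (use assms in \<open>auto simp: sum_chi f2add_eq_zero_iff\<close>)
  also have "\<dots> = 2 ^ r * x u"
    using assms by simp
  finally show ?thesis .
qed

lemma (in comm_group) subgroup_torsion_part: "subgroup (carrier (torsion_part G)) G"
proof (rule subgroupI)
  show "carrier (torsion_part G) \<subseteq> carrier G"
    by (auto simp: torsion_part_def)
  have "\<one> \<in> carrier (torsion_part G)"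
    by (auto simp: torsion_part_def intro!: exI[of _ "1::nat"])
  then show "carrier (torsion_part G) \<noteq> {}"
    by blast
next
  fix a assume "a \<in> carrier (torsion_part G)"
  then show "inv a \<in> carrier (torsion_part G)"
    by (auto simp: torsion_part_def nat_pow_inv)
next
  fix a b assume "a \<in> carrier (torsion_part G)" "b \<in> carrier (torsion_part G)"
  then obtain k m :: nat where a: "a \<in> carrier G" "k > 0" "a [^] k = \<one>"
    and b: "b \<in> carrier G" "m > 0" "b [^] m = \<one>"
    by (auto simp: torsion_part_def)
  have "a [^] (k * m) = \<one>" "b [^] (k * m) = \<one>"
    using a b by (metis nat_pow_pow nat_pow_one mult.commute)+
  then have "(a \<otimes> b) [^] (k * m) = \<one>"
    using a b by (simp add: nat_pow_distrib)
  then show "a \<otimes> b \<in> carrier (torsion_part G)"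
    using a b by (auto simp: torsion_part_def intro!: exI[of _ "k * m"])
qed

lemma (in comm_group) group_torsion_part: "group (torsion_part G)"
  using subgroup.subgroup_is_group[OF subgroup_torsion_part is_group] by (simp add: torsion_part_def)

lemma carrier_free_ab: "carrier (free_ab V) = {f. \<forall>x. x \<notin> V \<longrightarrow> f x = 0}"
  by (simp add: free_ab_def)

lemma free_ab_mult [simp]: "x \<otimes>\<^bsub>free_ab V\<^esub> y = (\<lambda>z. x z + y z)"
  by (simp add: free_ab_def)

lemma free_ab_one [simp]: "\<one>\<^bsub>free_ab V\<^esub> = (\<lambda>z. 0)"
  by (simp add: free_ab_def)

lemma comm_group_free_ab: "comm_group (free_ab V)"
proof (rule comm_groupI)
  fix x assume "x \<in> carrier (free_ab V)"
  then show "\<exists>y\<in>carrier (free_ab V). y \<otimes>\<^bsub>free_ab V\<^esub> x = \<one>\<^bsub>free_ab V\<^esub>"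
    by (intro bexI[of _ "\<lambda>z. - x z"]) (auto simp: free_ab_def)
qed (auto simp: free_ab_def)

lemma group_free_ab: "group (free_ab V)"
  using comm_group_free_ab comm_group.axioms(2) by blast

lemma free_ab_inv: "x \<in> carrier (free_ab V) \<Longrightarrow> inv\<^bsub>free_ab V\<^esub> x = (\<lambda>z. - x z)"
  by (rule group.inv_equality[OF group_free_ab]) (auto simp: carrier_free_ab)

lemma free_ab_pow: "x [^]\<^bsub>free_ab V\<^esub> (k::nat) = (\<lambda>z. int k * x z)"
proof (induction k)
  case 0
  then show ?case
    using monoid.nat_pow_0[OF group.is_monoid[OF group_free_ab]] by simp
next
  case (Suc k)
  then show ?case
    using monoid.nat_pow_Suc[OF group.is_monoid[OF group_free_ab]] by (simp add: algebra_simps)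
qed

lemma free_ab_rcos: "B #>\<^bsub>free_ab V\<^esub> x = (\<lambda>b z. b z + x z) ` B"
  by (auto simp: r_coset_def)

definition even_subsets :: "'a set \<Rightarrow> 'a set monoid" where
  "even_subsets V = \<lparr>carrier = {S. S \<subseteq> V \<and> even (card S)}, mult = sym_diff, one = {}\<rparr>"

lemma even_subsets_simps [simp]:
  "carrier (even_subsets V) = {S. S \<subseteq> V \<and> even (card S)}"
  "mult (even_subsets V) = sym_diff"
  "one (even_subsets V) = {}"
  by (simp_all add: even_subsets_def)

lemma comm_group_even_subsets:
  assumes "finite V"
  shows "comm_group (even_subsets V)"
proof (rule comm_groupI)
  fix x y
  assume "x \<in> carrier (even_subsets V)" "y \<in> carrier (even_subsets V)"
  then show "x \<otimes>\<^bsub>even_subsets V\<^esub> y \<in> carrier (even_subsets V)"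
    using assms even_card_sym_diff_iff[of x y] by (auto dest: finite_subset)
next
  fix x assume "x \<in> carrier (even_subsets V)"
  then show "\<exists>y\<in>carrier (even_subsets V). y \<otimes>\<^bsub>even_subsets V\<^esub> x = \<one>\<^bsub>even_subsets V\<^esub>"
    by (intro bexI[of _ x]) auto
qed auto

lemma group_even_subsets: "finite V \<Longrightarrow> group (even_subsets V)"
  using comm_group_even_subsets comm_group.axioms(2) by blast

lemma even_subsets_inv: "finite V \<Longrightarrow> x \<in> carrier (even_subsets V) \<Longrightarrow> inv\<^bsub>even_subsets V\<^esub> x = x"
  by (rule group.inv_equality[OF group_even_subsets]) auto

lemma even_subsets_rcos: "T #>\<^bsub>even_subsets V\<^esub> p = (\<lambda>t. sym_diff t p) ` T"
  by (auto simp: r_coset_def)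

lemma card_even_subsets:
  assumes "finite V"
  shows "card (carrier (even_subsets V)) = 2 ^ (card V - 1)"
proof (cases "V = {}")
  case False
  then obtain z where z: "z \<in> V" by blast
  define Ev where "Ev = {S. S \<subseteq> V \<and> even (card S)}"
  define Od where "Od = {S. S \<subseteq> V \<and> odd (card S)}"
  have "Pow V = Ev \<union> Od" "Ev \<inter> Od = {}" "finite Ev" "finite Od"
    using assms by (auto simp: Ev_def Od_def)
  then have "card Ev + card Od = 2 ^ card V"
    using assms card_Pow[of V] card_Un_disjoint[of Ev Od] by simp
  moreover have "bij_betw (\<lambda>S. sym_diff S {z}) Ev Od"
  proof (rule bij_betw_byWitness[where f' = "\<lambda>S. sym_diff S {z}"])
    have "S \<subseteq> V \<Longrightarrow> even (card (sym_diff S {z})) \<longleftrightarrow> odd (card S)" for S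
      using even_card_sym_diff_iff[of S "{z}"] assms finite_subset by auto
    then show "(\<lambda>S. sym_diff S {z}) ` Ev \<subseteq> Od" "(\<lambda>S. sym_diff S {z}) ` Od \<subseteq> Ev"
      using z by (auto simp: Ev_def Od_def)
  qed auto
  then have "card Ev = card Od"
    by (rule bij_betw_same_card)
  moreover have "(2::nat) ^ card V = 2 * 2 ^ (card V - 1)"
    using False assms by (cases "card V") auto
  ultimately show ?thesis
    by (simp add: Ev_def)
next
  case True
  then have "{S. S \<subseteq> V \<and> even (card S)} = {{}}"
    by auto
  then show ?thesis
    using True by simp
qed

section \<open>Sublattices of finite index in the degree-zero lattice\<close>

definition odd_support :: "('a \<Rightarrow> int) \<Rightarrow> 'a set" where
  "odd_support x = {z. odd (x z)}"

lemma odd_support_add: "odd_support (\<lambda>z. x z + y z) = sym_diff (odd_support x) (odd_support y)"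
  by (auto simp: odd_support_def)

definition degree_zero :: "'a set \<Rightarrow> ('a \<Rightarrow> int) set" where
  "degree_zero V = {x \<in> carrier (free_ab V). (\<Sum>u\<in>V. x u) = 0}"

lemma odd_support_degree_zero:
  assumes "finite V" "x \<in> degree_zero V"
  shows "odd_support x \<in> carrier (even_subsets V)"
proof -
  have "odd_support x = {u \<in> V. odd (x u)}"
    using assms(2) by (auto simp: odd_support_def degree_zero_def carrier_free_ab)
  then show ?thesis
    using assms odd_sum_iff_odd_card[of V x] by (simp add: degree_zero_def)
qed

lemma odd_support_onto_even_subsets:
  assumes "finite V" "S \<in> carrier (even_subsets V)"
  obtains x where "x \<in> degree_zero V" "odd_support x = S"
proof (cases "S = {}")
  case True
  then show ?thesis
    using that[of "\<lambda>_. 0"] by (simp add: degree_zero_def carrier_free_ab odd_support_def)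
next
  case False
  then obtain z0 where z0: "z0 \<in> S" by blast
  have S: "S \<subseteq> V" "finite S" "even (card S)"
    using assms by (auto dest: finite_subset)
  \<comment> \<open>the indicator of \<open>S\<close>, corrected at \<open>z0\<close> to have degree zero; \<open>1 - |S|\<close> stays odd\<close>
  define x where "x z = of_bool (z \<in> S) - (if z = z0 then int (card S) else 0)" for z
  have "(\<Sum>u\<in>V. x u) = int (card S) - int (card S)"
    using S z0 assms by (auto simp: x_def sum_subtractf Int_absorb2[OF \<open>S \<subseteq> V\<close>] Int_commute)
  moreover have "x \<in> carrier (free_ab V)"
    using S z0 by (auto simp: x_def carrier_free_ab)
  moreover have "odd_support x = S"
    using S z0 by (auto simp: odd_support_def x_def)
  ultimately show ?thesis
    using that by (simp add: degree_zero_def)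
qed

locale degree_zero_sublattice =
  fixes V :: "'a set" and B :: "('a \<Rightarrow> int) set"
  assumes finite_V: "finite V"
    and subgroup_B: "subgroup B (free_ab V)"
    and B_degree_zero: "B \<subseteq> degree_zero V"
    and finite_index: "\<And>x. x \<in> degree_zero V \<Longrightarrow> \<exists>k>0. (\<lambda>z. int k * x z) \<in> B"
begin

abbreviation "K \<equiv> torsion_part (free_ab V Mod B)"
abbreviation "T \<equiv> odd_support ` B"
abbreviation "Q \<equiv> even_subsets V Mod T"

lemma normal_B: "B \<lhd> free_ab V"
  using comm_group.subgroup_imp_normal[OF comm_group_free_ab subgroup_B] .

lemma degree_zero_carrier: "x \<in> degree_zero V \<Longrightarrow> x \<in> carrier (free_ab V)"
  by (simp add: degree_zero_def)

lemma rcos_eq_B_iff: "x \<in> carrier (free_ab V) \<Longrightarrow> B #>\<^bsub>free_ab V\<^esub> x = B \<longleftrightarrow> x \<in> B"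
  using group.coset_join1[OF group_free_ab _ _ subgroup_B] group.coset_join2[OF group_free_ab _ subgroup_B]
  by blast

lemma rcos_pow:
  "x \<in> carrier (free_ab V) \<Longrightarrow>
    (B #>\<^bsub>free_ab V\<^esub> x) [^]\<^bsub>free_ab V Mod B\<^esub> (k::nat) = B #>\<^bsub>free_ab V\<^esub> (\<lambda>z. int k * x z)"
  using normal.FactGroup_pow[OF normal_B] by (simp add: free_ab_pow)

lemma carrier_K: "carrier K = (\<lambda>x. B #>\<^bsub>free_ab V\<^esub> x) ` degree_zero V"
proof (intro Set.set_eqI iffI)
  fix X assume "X \<in> carrier K"
  then obtain k :: nat where X: "X \<in> carrier (free_ab V Mod B)" "k > 0"
    "X [^]\<^bsub>free_ab V Mod B\<^esub> k = B"
    by (auto simp: torsion_part_def)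
  then obtain x where x: "x \<in> carrier (free_ab V)" "X = B #>\<^bsub>free_ab V\<^esub> x"
    by (auto simp: carrier_FactGroup)
  have "(\<lambda>z. int k * x z) \<in> B"
    using X x rcos_pow rcos_eq_B_iff by (simp add: carrier_free_ab)
  then have "(\<Sum>u\<in>V. int k * x u) = 0"
    using B_degree_zero by (auto simp: degree_zero_def)
  then have "x \<in> degree_zero V"
    using X x by (simp add: degree_zero_def sum_distrib_left[symmetric])
  then show "X \<in> (\<lambda>x. B #>\<^bsub>free_ab V\<^esub> x) ` degree_zero V"
    using x by blast
next
  fix X assume "X \<in> (\<lambda>x. B #>\<^bsub>free_ab V\<^esub> x) ` degree_zero V"
  then obtain x where x: "x \<in> degree_zero V" "X = B #>\<^bsub>free_ab V\<^esub> x" by auto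
  obtain k :: nat where "k > 0" "(\<lambda>z. int k * x z) \<in> B"
    using finite_index[OF x(1)] by blast
  then have "X [^]\<^bsub>free_ab V Mod B\<^esub> k = B"
    using x degree_zero_carrier rcos_pow rcos_eq_B_iff by (simp add: carrier_free_ab)
  moreover have "X \<in> carrier (free_ab V Mod B)"
    using x degree_zero_carrier by (auto simp: carrier_FactGroup)
  ultimately show "X \<in> carrier K"
    using \<open>k > 0\<close> by (auto simp: torsion_part_def)
qed

lemma group_K: "group K"
  using comm_group.group_torsion_part[OF comm_group.abelian_FactGroup[OF comm_group_free_ab subgroup_B]] .

lemma rcos_mult_K:
  "x \<in> carrier (free_ab V) \<Longrightarrow> y \<in> carrier (free_ab V) \<Longrightarrow>
    (B #>\<^bsub>free_ab V\<^esub> x) \<otimes>\<^bsub>K\<^esub> (B #>\<^bsub>free_ab V\<^esub> y) = B #>\<^bsub>free_ab V\<^esub> (\<lambda>z. x z + y z)"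
  using normal.rcos_sum[OF normal_B] by (simp add: torsion_part_def)

lemma subgroup_T: "subgroup T (even_subsets V)"
proof (rule group.subgroupI[OF group_even_subsets[OF finite_V]])
  show "T \<subseteq> carrier (even_subsets V)"
    using B_degree_zero odd_support_degree_zero[OF finite_V] by blast
  then show "\<And>a. a \<in> T \<Longrightarrow> inv\<^bsub>even_subsets V\<^esub> a \<in> T"
    using even_subsets_inv[OF finite_V] by auto
  show "T \<noteq> {}"
    using subgroup.one_closed[OF subgroup_B] by blast
next
  fix a b assume "a \<in> T" "b \<in> T"
  then obtain x y where "x \<in> B" "y \<in> B" "a = odd_support x" "b = odd_support y" by auto
  then have "a \<otimes>\<^bsub>even_subsets V\<^esub> b = odd_support (\<lambda>z. x z + y z)"
    and "(\<lambda>z. x z + y z) \<in> B"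
    using subgroup.m_closed[OF subgroup_B, of x y] by (simp_all add: odd_support_add)
  then show "a \<otimes>\<^bsub>even_subsets V\<^esub> b \<in> T"
    by simp
qed

lemma normal_T: "T \<lhd> even_subsets V"
  using comm_group.subgroup_imp_normal[OF comm_group_even_subsets[OF finite_V] subgroup_T] .

lemma odd_support_rcos:
  "odd_support ` (B #>\<^bsub>free_ab V\<^esub> x) = T #>\<^bsub>even_subsets V\<^esub> odd_support x"
  by (simp add: free_ab_rcos even_subsets_rcos image_image odd_support_add)

lemma reduction_hom: "(\<lambda>X. odd_support ` X) \<in> hom K Q"
proof (rule homI)
  fix X assume "X \<in> carrier K"
  then obtain x where "x \<in> degree_zero V" "X = B #>\<^bsub>free_ab V\<^esub> x"
    using carrier_K by auto
  then show "odd_support ` X \<in> carrier Q"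
    using odd_support_degree_zero[OF finite_V] by (auto simp: odd_support_rcos carrier_FactGroup)
next
  fix X Y assume "X \<in> carrier K" "Y \<in> carrier K"
  then obtain x y where x: "x \<in> degree_zero V" "X = B #>\<^bsub>free_ab V\<^esub> x"
    and y: "y \<in> degree_zero V" "Y = B #>\<^bsub>free_ab V\<^esub> y"
    using carrier_K by auto
  have "odd_support ` (X \<otimes>\<^bsub>K\<^esub> Y) = T #>\<^bsub>even_subsets V\<^esub> sym_diff (odd_support x) (odd_support y)"
    using x y degree_zero_carrier by (simp add: rcos_mult_K odd_support_rcos odd_support_add)
  also have "\<dots> = odd_support ` X \<otimes>\<^bsub>Q\<^esub> odd_support ` Y"
    using normal.rcos_sum[OF normal_T] odd_support_degree_zero[OF finite_V] x y
    by (simp add: odd_support_rcos)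
  finally show "odd_support ` (X \<otimes>\<^bsub>K\<^esub> Y) = odd_support ` X \<otimes>\<^bsub>Q\<^esub> odd_support ` Y" .
qed

lemma reduction_surj: "(\<lambda>X. odd_support ` X) ` carrier K = carrier Q"
proof
  show "(\<lambda>X. odd_support ` X) ` carrier K \<subseteq> carrier Q"
    using reduction_hom by (auto simp: hom_def)
next
  show "carrier Q \<subseteq> (\<lambda>X. odd_support ` X) ` carrier K"
  proof
    fix Z assume "Z \<in> carrier Q"
    then obtain S where S: "S \<in> carrier (even_subsets V)" "Z = T #>\<^bsub>even_subsets V\<^esub> S"
      by (auto simp: carrier_FactGroup)
    obtain x where x: "x \<in> degree_zero V" "odd_support x = S"
      using odd_support_onto_even_subsets[OF finite_V S(1)] .
    then have "Z = odd_support ` (B #>\<^bsub>free_ab V\<^esub> x)"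
      using S by (simp add: odd_support_rcos)
    moreover have "B #>\<^bsub>free_ab V\<^esub> x \<in> carrier K"
      using carrier_K x(1) by blast
    ultimately show "Z \<in> (\<lambda>X. odd_support ` X) ` carrier K"
      by blast
  qed
qed

lemma square_Q: "Z \<in> carrier Q \<Longrightarrow> Z \<otimes>\<^bsub>Q\<^esub> Z = \<one>\<^bsub>Q\<^esub>"
proof -
  assume "Z \<in> carrier Q"
  then obtain S where S: "S \<in> carrier (even_subsets V)" "Z = T #>\<^bsub>even_subsets V\<^esub> S"
    by (auto simp: carrier_FactGroup)
  then have "Z \<otimes>\<^bsub>Q\<^esub> Z = T #>\<^bsub>even_subsets V\<^esub> {}"
    using normal.rcos_sum[OF normal_T S(1) S(1)] by simp
  also have "\<dots> = T"
    using subgroup.rcos_const[OF subgroup_T group_even_subsets[OF finite_V]]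
      subgroup.one_closed[OF subgroup_T] by simp
  finally show ?thesis by simp
qed

lemma rcos_eq_double_if_odd_support_eq:
  assumes x: "x \<in> degree_zero V" and b: "b \<in> B" "odd_support b = odd_support x"
  obtains y where "y \<in> degree_zero V" "B #>\<^bsub>free_ab V\<^esub> x = B #>\<^bsub>free_ab V\<^esub> (\<lambda>z. y z + y z)"
proof -
  have xb: "x \<in> carrier (free_ab V)" "b \<in> carrier (free_ab V)"
    using x b subgroup.mem_carrier[OF subgroup_B] degree_zero_carrier by auto
  define y where "y z = (x z - b z) div 2" for z
  have y2: "y z + y z = x z - b z" for z
  proof -
    have "odd (x z) \<longleftrightarrow> odd (b z)"
      using b(2) unfolding odd_support_def by blast
    then show ?thesis
      unfolding y_def by presburger
  qed
  have "2 * (\<Sum>u\<in>V. y u) = (\<Sum>u\<in>V. x u) - (\<Sum>u\<in>V. b u)"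
    by (simp add: mult_2 y2 sum.distrib[symmetric] sum_subtractf[symmetric])
  then have "y \<in> degree_zero V"
    using x b xb B_degree_zero by (auto simp: degree_zero_def carrier_free_ab y_def)
  moreover have "(\<lambda>z. y z + y z) \<in> B #>\<^bsub>free_ab V\<^esub> x"
    using subgroup.m_inv_closed[OF subgroup_B b(1)] free_ab_inv[OF xb(2)]
    by (auto simp: free_ab_rcos y2 intro!: image_eqI[where x = "\<lambda>z. - b z"])
  then have "B #>\<^bsub>free_ab V\<^esub> x = B #>\<^bsub>free_ab V\<^esub> (\<lambda>z. y z + y z)"
    using group.repr_independence[OF group_free_ab _ xb(1) subgroup_B] by simp
  ultimately show ?thesis
    using that by blast
qed

lemma kernel_reduction: "kernel K Q (\<lambda>X. odd_support ` X) = {a \<otimes>\<^bsub>K\<^esub> a | a. a \<in> carrier K}"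
proof (intro Set.set_eqI iffI)
  fix X assume "X \<in> {a \<otimes>\<^bsub>K\<^esub> a | a. a \<in> carrier K}"
  then obtain a where a: "a \<in> carrier K" "X = a \<otimes>\<^bsub>K\<^esub> a" by auto
  then have "odd_support ` X = \<one>\<^bsub>Q\<^esub>"
    using reduction_hom square_Q by (auto simp: hom_def)
  then show "X \<in> kernel K Q (\<lambda>X. odd_support ` X)"
    using a group.is_monoid[OF group_K] by (simp add: kernel_def monoid.m_closed)
next
  fix X assume "X \<in> kernel K Q (\<lambda>X. odd_support ` X)"
  then obtain x where x: "x \<in> degree_zero V" "X = B #>\<^bsub>free_ab V\<^esub> x"
    and "T #>\<^bsub>even_subsets V\<^esub> odd_support x = T"
    using carrier_K by (auto simp: kernel_def odd_support_rcos)
  then have "odd_support x \<in> T"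
    using group.coset_join1[OF group_even_subsets[OF finite_V] _ _ subgroup_T]
      odd_support_degree_zero[OF finite_V] by blast
  then obtain b where "b \<in> B" "odd_support b = odd_support x" by auto
  then obtain y where "y \<in> degree_zero V" "B #>\<^bsub>free_ab V\<^esub> x = B #>\<^bsub>free_ab V\<^esub> (\<lambda>z. y z + y z)"
    by (rule rcos_eq_double_if_odd_support_eq[OF x(1)])
  with x(2) have "B #>\<^bsub>free_ab V\<^esub> y \<in> carrier K"
    and "X = (B #>\<^bsub>free_ab V\<^esub> y) \<otimes>\<^bsub>K\<^esub> (B #>\<^bsub>free_ab V\<^esub> y)"
    using carrier_K degree_zero_carrier rcos_mult_K by auto
  then show "X \<in> {a \<otimes>\<^bsub>K\<^esub> a | a. a \<in> carrier K}"
    by blast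
qed

theorem card_mod_two:
  "finite (carrier (mod_two K)) \<and> card (carrier (mod_two K)) * card T = 2 ^ (card V - 1)"
proof -
  have "group_hom K Q (\<lambda>X. odd_support ` X)"
    using group_K normal.factorgroup_is_group[OF normal_T] reduction_hom
    by (simp add: group_hom_def group_hom_axioms_def)
  then have "bij_betw (\<lambda>C. the_elem ((\<lambda>X. odd_support ` X) ` C)) (carrier (mod_two K)) (carrier Q)"
    using group_hom.FactGroup_iso_set[OF _ reduction_surj]
    by (simp add: iso_def mod_two_def kernel_reduction)
  moreover have "card (carrier Q) * card T = 2 ^ (card V - 1)"
    using group.lagrange[OF group_even_subsets[OF finite_V] subgroup_T] card_even_subsets[OF finite_V]
    by (simp add: FactGroup_def order_def)
  moreover have "finite (carrier Q)"
    using group.rcosets_subset_PowG[OF group_even_subsets[OF finite_V] subgroup_T] finite_V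
    by (simp add: FactGroup_def finite_subset)
  ultimately show ?thesis
    by (metis bij_betw_finite bij_betw_same_card)
qed

end

section \<open>The Laplacian of the Cayley graph\<close>

locale cayley_graph =
  fixes r :: nat and M :: "bool list list"
  assumes M_nonzero_vecs: "\<forall>v \<in> set M. v \<in> f2vecs r \<and> v \<noteq> f2zero r"
begin

abbreviation "n \<equiv> length M"

lemma length_M_nth: "i < n \<Longrightarrow> length (M ! i) = r"
  using M_nonzero_vecs nth_mem by auto

lemma M_nth_nonzero: "i < n \<Longrightarrow> M ! i \<noteq> f2zero r"
  using M_nonzero_vecs nth_mem by auto

definition laplace :: "(bool list \<Rightarrow> int) \<Rightarrow> bool list \<Rightarrow> int" where
  "laplace c u = (if u \<in> f2vecs r then \<Sum>i<n. c u - c (f2add u (M ! i)) else 0)"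

lemma sum_cayley_laplacian:
  assumes u: "u \<in> f2vecs r"
  shows "(\<Sum>w\<in>f2vecs r. cayley_laplacian M u w * c w) = laplace c u"
proof -
  have neighbour: "f2add u (M ! i) \<in> f2vecs r - {u}" if "i < n" for i
    using u that length_M_nth M_nth_nonzero by (auto simp: f2add_eq_self_iff)
  have card_sum: "int (card {i. i < n \<and> f2add u (M ! i) = w}) * c w
      = (\<Sum>i<n. if f2add u (M ! i) = w then c w else 0)" for w
  proof -
    have "(\<Sum>i<n. if f2add u (M ! i) = w then c w else 0) = (\<Sum>i\<in>{i. i < n \<and> f2add u (M ! i) = w}. c w)"
      by (rule sum.mono_neutral_cong_right) auto
    then show ?thesis by simp
  qed
  have "(\<Sum>w\<in>f2vecs r - {u}. cayley_laplacian M u w * c w)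
      = (\<Sum>w\<in>f2vecs r - {u}. - (\<Sum>i<n. if f2add u (M ! i) = w then c w else 0))"
    by (rule sum.cong) (auto simp: cayley_laplacian_def card_sum)
  also have "\<dots> = - (\<Sum>i<n. \<Sum>w\<in>f2vecs r - {u}. if f2add u (M ! i) = w then c w else 0)"
    unfolding sum_negf by (subst sum.swap) (rule refl)
  also have "\<dots> = - (\<Sum>i<n. c (f2add u (M ! i)))"
    by (intro arg_cong[where f = uminus] sum.cong) (use neighbour in auto)
  finally show ?thesis
    using u by (simp add: sum.remove laplace_def sum_subtractf cayley_laplacian_def)
qed

lemma mat_image_cayley_laplacian:
  "mat_image (f2vecs r) (cayley_laplacian M) = laplace ` carrier (free_ab (f2vecs r))"
proof -
  have "(\<lambda>u. if u \<in> f2vecs r then \<Sum>w\<in>f2vecs r. cayley_laplacian M u w * c w else 0) = laplace c" for c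
    by (rule ext) (simp add: sum_cayley_laplacian laplace_def)
  then show ?thesis
    unfolding mat_image_def by auto
qed

lemma laplace_cong: "(\<And>w. w \<in> f2vecs r \<Longrightarrow> c w = d w) \<Longrightarrow> laplace c = laplace d"
  by (intro ext) (auto simp: laplace_def length_M_nth intro!: sum.cong)

lemma laplace_add: "laplace (\<lambda>z. c z + d z) = (\<lambda>u. laplace c u + laplace d u)"
  by (auto simp: laplace_def sum.distrib[symmetric] algebra_simps)

lemma laplace_scale: "laplace (\<lambda>z. k * c z) = (\<lambda>u. k * laplace c u)"
  by (auto simp: laplace_def sum_distrib_left algebra_simps)

lemma laplace_sum: "finite S \<Longrightarrow> laplace (\<lambda>z. \<Sum>s\<in>S. f s z) u = (\<Sum>s\<in>S. laplace (f s) u)"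
  by (induction S rule: finite_induct) (simp_all add: laplace_add, simp add: laplace_def)

lemma laplace_in_carrier: "laplace c \<in> carrier (free_ab (f2vecs r))"
  by (simp add: carrier_free_ab laplace_def)

lemma sum_laplace: "(\<Sum>u\<in>f2vecs r. laplace c u) = 0"
proof -
  have "(\<Sum>u\<in>f2vecs r. laplace c u)
      = (\<Sum>i<n. (\<Sum>u\<in>f2vecs r. c u) - (\<Sum>u\<in>f2vecs r. c (f2add u (M ! i))))"
    by (simp add: laplace_def sum_subtractf sum_distrib_left) (rule sum.swap)
  also have "\<dots> = 0"
    by (rule sum.neutral) (simp add: sum_f2add_shift length_M_nth)
  finally show ?thesis .
qed

lemma laplace_image_degree_zero: "laplace ` carrier (free_ab (f2vecs r)) \<subseteq> degree_zero (f2vecs r)"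
  using laplace_in_carrier sum_laplace by (auto simp: degree_zero_def)

lemma subgroup_laplace_image: "subgroup (laplace ` carrier (free_ab (f2vecs r))) (free_ab (f2vecs r))"
proof (rule group.subgroupI[OF group_free_ab])
  show "laplace ` carrier (free_ab (f2vecs r)) \<subseteq> carrier (free_ab (f2vecs r))"
    using laplace_in_carrier by auto
  show "laplace ` carrier (free_ab (f2vecs r)) \<noteq> {}"
    using group.is_monoid[OF group_free_ab] monoid.one_closed by blast
next
  fix a assume "a \<in> laplace ` carrier (free_ab (f2vecs r))"
  then obtain c where c: "c \<in> carrier (free_ab (f2vecs r))" "a = laplace c" by auto
  then have "inv\<^bsub>free_ab (f2vecs r)\<^esub> a = laplace (\<lambda>z. (-1) * c z)"
    using free_ab_inv[OF laplace_in_carrier] laplace_scale[of "-1" c] by simp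
  moreover have "(\<lambda>z. (-1) * c z) \<in> carrier (free_ab (f2vecs r))"
    using c by (simp add: carrier_free_ab)
  ultimately show "inv\<^bsub>free_ab (f2vecs r)\<^esub> a \<in> laplace ` carrier (free_ab (f2vecs r))"
    by blast
next
  fix a b assume "a \<in> laplace ` carrier (free_ab (f2vecs r))" "b \<in> laplace ` carrier (free_ab (f2vecs r))"
  then obtain c d where "c \<in> carrier (free_ab (f2vecs r))" "a = laplace c"
    "d \<in> carrier (free_ab (f2vecs r))" "b = laplace d" by auto
  moreover have "(\<lambda>z. c z + d z) \<in> carrier (free_ab (f2vecs r))"
    using calculation by (simp add: carrier_free_ab)
  ultimately show "a \<otimes>\<^bsub>free_ab (f2vecs r)\<^esub> b \<in> laplace ` carrier (free_ab (f2vecs r))"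
    by (auto simp: laplace_add[symmetric])
qed

definition eigenvalue :: "bool list \<Rightarrow> int" where
  "eigenvalue s = (\<Sum>i<n. 1 - chi s (M ! i))"

lemma laplace_chi:
  assumes "s \<in> f2vecs r" "u \<in> f2vecs r"
  shows "laplace (chi s) u = eigenvalue s * chi s u"
proof -
  have "chi s u - chi s (f2add u (M ! i)) = chi s u * (1 - chi s (M ! i))" if "i < n" for i
    using assms that by (simp add: chi_f2add_right length_M_nth algebra_simps)
  then show ?thesis
    using assms by (simp add: laplace_def eigenvalue_def sum_distrib_left mult.commute)
qed

lemma laplace_character_combination:
  assumes "S \<subseteq> f2vecs r" "u \<in> f2vecs r"
  shows "laplace (\<lambda>w. if w \<in> f2vecs r then \<Sum>s\<in>S. a s * chi s w else 0) u
    = (\<Sum>s\<in>S. a s * eigenvalue s * chi s u)"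
proof -
  have "laplace (\<lambda>w. if w \<in> f2vecs r then \<Sum>s\<in>S. a s * chi s w else 0) u
      = laplace (\<lambda>w. \<Sum>s\<in>S. a s * chi s w) u"
    using laplace_cong[of "\<lambda>w. if w \<in> f2vecs r then \<Sum>s\<in>S. a s * chi s w else 0"
        "\<lambda>w. \<Sum>s\<in>S. a s * chi s w"] by simp
  also have "\<dots> = (\<Sum>s\<in>S. a s * laplace (chi s) u)"
    using finite_subset[OF assms(1)] by (simp add: laplace_sum laplace_scale)
  also have "\<dots> = (\<Sum>s\<in>S. a s * eigenvalue s * chi s u)"
    using assms laplace_chi by (intro sum.cong) (simp_all add: subset_iff)
  finally show ?thesis .
qed

definition laplace_mod2 :: "bool list set \<Rightarrow> bool list set" where
  "laplace_mod2 S = odd_support (laplace (\<lambda>z. of_bool (z \<in> S)))"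

lemma odd_support_laplace: "odd_support (laplace c) = laplace_mod2 (odd_support c)"
proof -
  define I where "I z = (of_bool (z \<in> odd_support c) :: int)" for z
  define y where "y z = (c z - I z) div 2" for z
  have "c = (\<lambda>z. I z + 2 * y z)"
  proof
    fix z show "c z = I z + 2 * y z"
      unfolding y_def I_def odd_support_def by (cases "even (c z)") (auto elim!: evenE oddE)
  qed
  then have "laplace c = (\<lambda>u. laplace I u + 2 * laplace y u)"
    using arg_cong[of _ _ laplace] by (simp add: laplace_add laplace_scale)
  then show ?thesis
    by (simp add: laplace_mod2_def odd_support_def I_def[abs_def])
qed

lemma laplace_mod2_sym_diff: "laplace_mod2 (sym_diff S S') = sym_diff (laplace_mod2 S) (laplace_mod2 S')"
proof -
  have "sym_diff S S' = odd_support (\<lambda>z. of_bool (z \<in> S) + of_bool (z \<in> S'))"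
    by (auto simp: odd_support_def)
  then have "laplace_mod2 (sym_diff S S') = odd_support (laplace (\<lambda>z. of_bool (z \<in> S) + of_bool (z \<in> S')))"
    by (simp only: odd_support_laplace)
  then show ?thesis
    by (simp only: laplace_add odd_support_add laplace_mod2_def)
qed

lemma laplace_mod2_subset: "laplace_mod2 S \<subseteq> f2vecs r"
  by (auto simp: laplace_mod2_def odd_support_def laplace_def)

lemma in_laplace_mod2_iff:
  assumes "u \<in> f2vecs r" "u \<notin> S"
  shows "u \<in> laplace_mod2 S \<longleftrightarrow> odd (card {i. i < n \<and> f2add u (M ! i) \<in> S})"
proof -
  have "{..<n} \<inter> {i. f2add u (M ! i) \<in> S} = {i. i < n \<and> f2add u (M ! i) \<in> S}"
    by auto
  then show ?thesis
    using assms by (simp add: laplace_mod2_def odd_support_def laplace_def sum_negf)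
qed

lemma even_laplace_laplace: "even (laplace (laplace c) u)"
proof (cases "u \<in> f2vecs r")
  case True
  define w where "w i k = f2add (f2add u (M ! i)) (M ! k)" for i k
  define S1 where "S1 = (\<Sum>k<n. c (f2add u (M ! k)))"
  define Q where "Q = (\<Sum>i<n. \<Sum>k<n. c (w i k))"
  have "laplace c (f2add u (M ! i)) = (\<Sum>k<n. c (f2add u (M ! i)) - c (w i k))" if "i < n" for i
    using True that by (simp add: laplace_def w_def length_M_nth)
  then have "laplace (laplace c) u = (\<Sum>i<n. laplace c u - (\<Sum>k<n. c (f2add u (M ! i)) - c (w i k)))"
    unfolding laplace_def[of "laplace c" u] using True by simp
  also have "\<dots> = int n * (int n * c u - S1) - int n * S1 + Q"
    using True by (simp add: laplace_def sum_subtractf S1_def Q_def sum_distrib_left)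
  finally have "laplace (laplace c) u = int n * (int n * c u - S1) - int n * S1 + Q" .
  moreover have "even (Q - (\<Sum>i<n. c (w i i)))"
    unfolding Q_def using True
    by (intro even_double_sum_minus_diagonal) (simp_all add: w_def length_M_nth f2add_right_commute)
  moreover have "(\<Sum>i<n. c (w i i)) = int n * c u"
    using True by (simp add: w_def f2add_cancel_right length_M_nth)
  ultimately have "laplace (laplace c) u = (Q - int n * c u) + int n * (int n + 1) * c u - 2 * (int n * S1)"
    by (simp add: algebra_simps)
  moreover have "even (Q - int n * c u)" "even (int n * (int n + 1))"
    using \<open>even (Q - (\<Sum>i<n. c (w i i)))\<close> \<open>(\<Sum>i<n. c (w i i)) = int n * c u\<close> by auto
  ultimately show ?thesis
    by simp
qed (simp add: laplace_def)

lemma laplace_mod2_square_zero: "laplace_mod2 (laplace_mod2 S) = {}"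
  unfolding laplace_mod2_def[of S] odd_support_laplace[symmetric]
  using even_laplace_laplace by (simp add: odd_support_def)

lemma odd_support_laplace_image:
  "odd_support ` laplace ` carrier (free_ab (f2vecs r)) = laplace_mod2 ` Pow (f2vecs r)"
proof -
  have "odd_support ` carrier (free_ab (f2vecs r)) = Pow (f2vecs r)"
  proof (intro equalityI subsetI)
    fix S assume "S \<in> Pow (f2vecs r)"
    then have "S = odd_support (\<lambda>z. of_bool (z \<in> S))" "(\<lambda>z. of_bool (z \<in> S)) \<in> carrier (free_ab (f2vecs r))"
      by (auto simp: odd_support_def carrier_free_ab)
    then show "S \<in> odd_support ` carrier (free_ab (f2vecs r))"
      by blast
  qed (auto simp: odd_support_def carrier_free_ab)
  then show ?thesis
    by (metis (no_types, lifting) image_cong image_image odd_support_laplace)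
qed

end

locale connected_cayley_graph = cayley_graph +
  assumes M_generates: "f2generates r M"
begin

lemma ex_f2dot_M_nth:
  assumes "s \<in> f2vecs r" "s \<noteq> f2zero r"
  shows "\<exists>i<n. f2dot s (M ! i)"
proof (rule ccontr)
  assume orthogonal: "\<not> (\<exists>i<n. f2dot s (M ! i))"
  obtain j where j: "j < r" "s ! j"
    using ex_nth_if_nonzero assms by auto
  obtain I where I: "f2sum r (map (\<lambda>i. M ! i) (filter (\<lambda>i. i \<in> I) [0..<n])) = unit_vec r j"
    using M_generates unfolding f2generates_def by (metis f2vecs_iff length_unit_vec)
  have "\<not> f2dot s (f2sum r (map (\<lambda>i. M ! i) (filter (\<lambda>i. i \<in> I) [0..<n])))"
    by (rule not_f2dot_f2sum) (use orthogonal length_M_nth assms in auto)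
  moreover have "f2dot s (unit_vec r j)"
    using f2dot_commute[of s "unit_vec r j"] f2dot_unit_vec[of j r s] j assms by simp
  ultimately show False
    using I by simp
qed

lemma eigenvalue_pos:
  assumes "s \<in> f2vecs r" "s \<noteq> f2zero r"
  shows "eigenvalue s > 0"
proof -
  obtain i where i: "i < n" "f2dot s (M ! i)"
    using ex_f2dot_M_nth assms by blast
  have "eigenvalue s = (1 - chi s (M ! i)) + (\<Sum>k\<in>{..<n} - {i}. 1 - chi s (M ! k))"
    unfolding eigenvalue_def using i by (simp add: sum.remove)
  moreover have "(\<Sum>k\<in>{..<n} - {i}. 1 - chi s (M ! k)) \<ge> 0"
    by (rule sum_nonneg) (simp add: chi_def)
  ultimately show ?thesis
    using i by (simp add: chi_def)
qed

lemma eigenvalue_dvd_fact: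
  assumes "s \<in> f2vecs r" "s \<noteq> f2zero r"
  shows "eigenvalue s dvd int (fact (2 * n))"
proof -
  have "eigenvalue s \<le> (\<Sum>i<n. 2)"
    unfolding eigenvalue_def by (rule sum_mono) (simp add: chi_def)
  then have "nat (eigenvalue s) dvd fact (2 * n)"
    using eigenvalue_pos[OF assms] by (intro dvd_fact) auto
  then show ?thesis
    using eigenvalue_pos[OF assms] by (metis int_dvd_int_iff int_nat_eq less_le_not_le)
qed

lemma laplace_image_finite_index:
  assumes x: "x \<in> degree_zero (f2vecs r)"
  shows "(\<lambda>z. int (2 ^ r * fact (2 * n)) * x z) \<in> laplace ` carrier (free_ab (f2vecs r))"
proof -
  define P where "P = int (fact (2 * n))"
  define S where "S = f2vecs r - {f2zero r}"
  define a where "a s = (\<Sum>w\<in>f2vecs r. chi s w * x w)" for s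
  \<comment> \<open>invert \<open>L\<close> on each nontrivial character; \<open>a\<close> has no constant term as \<open>x\<close> has degree zero\<close>
  define y where "y w = (if w \<in> f2vecs r then \<Sum>s\<in>S. a s * (P div eigenvalue s) * chi s w else 0)" for w
  have "a (f2zero r) = 0"
    using x by (simp add: a_def chi_def f2dot_f2zero_left degree_zero_def)
  have "laplace y u = int (2 ^ r * fact (2 * n)) * x u" for u
  proof (cases "u \<in> f2vecs r")
    case True
    have "laplace y u = (\<Sum>s\<in>S. a s * (P div eigenvalue s) * eigenvalue s * chi s u)"
      unfolding y_def by (rule laplace_character_combination) (use True in \<open>auto simp: S_def\<close>)
    also have "\<dots> = (\<Sum>s\<in>S. P * (a s * chi s u))"
      using eigenvalue_dvd_fact by (intro sum.cong) (auto simp: S_def P_def)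
    also have "\<dots> = P * (\<Sum>s\<in>f2vecs r. a s * chi s u)"
      using \<open>a (f2zero r) = 0\<close> by (simp add: S_def sum_distrib_left sum.remove[of _ "f2zero r"])
    also have "\<dots> = P * (2 ^ r * x u)"
      using character_inversion[of u r x] True by (simp add: a_def)
    finally show ?thesis
      by (simp add: P_def)
  next
    case False
    then show ?thesis
      using x by (simp add: laplace_def degree_zero_def carrier_free_ab)
  qed
  moreover have "y \<in> carrier (free_ab (f2vecs r))"
    by (simp add: carrier_free_ab y_def)
  ultimately show ?thesis
    by (metis image_eqI ext)
qed

end

sublocale connected_cayley_graph \<subseteq> degree_zero_sublattice "f2vecs r" "laplace ` carrier (free_ab (f2vecs r))"
proof (rule degree_zero_sublattice.intro)
  fix x assume "x \<in> degree_zero (f2vecs r)"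
  then show "\<exists>k>0. (\<lambda>z. int k * x z) \<in> laplace ` carrier (free_ab (f2vecs r))"
    using laplace_image_finite_index by (intro exI[of _ "2 ^ r * fact (2 * n)"]) simp
qed (simp_all add: subgroup_laplace_image laplace_image_degree_zero)

section \<open>The rank of the Laplacian mod 2\<close>

lemma eq_if_sym_diff_in_trivial_kernel:
  fixes f :: "'a set \<Rightarrow> 'a set"
  assumes linear: "\<And>S S'. S \<subseteq> V \<Longrightarrow> S' \<subseteq> V \<Longrightarrow> f (sym_diff S S') = sym_diff (f S) (f S')"
    and kernel: "\<And>S. S \<subseteq> H \<Longrightarrow> f S = {} \<Longrightarrow> S = {}"
    and "S \<subseteq> V" "S' \<subseteq> V" "sym_diff S S' \<subseteq> H" "f S = f S'"
  shows "S = S'"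
proof -
  have "f (sym_diff S S') = {}"
    using linear[OF assms(3,4)] assms(6) by simp
  then have "sym_diff S S' = {}"
    using kernel[OF assms(5)] by simp
  then show ?thesis by auto
qed

lemma card_image_square_zero:
  fixes f :: "'a set \<Rightarrow> 'a set"
  assumes "finite V" "H \<subseteq> V" "card H = card (V - H)"
    and linear: "\<And>S S'. S \<subseteq> V \<Longrightarrow> S' \<subseteq> V \<Longrightarrow> f (sym_diff S S') = sym_diff (f S) (f S')"
    and into: "\<And>S. S \<subseteq> V \<Longrightarrow> f S \<subseteq> V"
    and square_zero: "\<And>S. S \<subseteq> V \<Longrightarrow> f (f S) = {}"
    and kernel: "\<And>S. S \<subseteq> H \<Longrightarrow> f S = {} \<Longrightarrow> S = {}"
  shows "card (f ` Pow V) = 2 ^ card H"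
proof (rule antisym)
  have eq_if: "S = S'" if "S \<subseteq> V" "S' \<subseteq> V" "sym_diff S S' \<subseteq> H" "f S = f S'" for S S'
    using eq_if_sym_diff_in_trivial_kernel[OF linear kernel that] .
  have "inj_on f (Pow H)"
  proof (rule inj_onI)
    fix S S' assume "S \<in> Pow H" "S' \<in> Pow H" "f S = f S'"
    then show "S = S'"
      using assms(2) eq_if[of S S'] by auto
  qed
  then have "card (f ` Pow H) = 2 ^ card H"
    using assms(1,2) by (simp add: card_image card_Pow finite_subset)
  moreover have "card (f ` Pow H) \<le> card (f ` Pow V)"
    using assms(1,2) by (intro card_mono) auto
  ultimately show "2 ^ card H \<le> card (f ` Pow V)"
    by simp
  \<comment> \<open>the image lies in the kernel, and the kernel embeds into \<open>Pow (V - H)\<close>\<close>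
  define Ker where "Ker = {S \<in> Pow V. f S = {}}"
  have "card (f ` Pow V) \<le> card Ker"
    using into square_zero assms(1) by (intro card_mono) (auto simp: Ker_def)
  also have "card Ker \<le> card (Pow (V - H))"
  proof (rule card_inj_on_le)
    show "inj_on (\<lambda>S. S - H) Ker"
    proof (rule inj_onI)
      fix S S' assume "S \<in> Ker" "S' \<in> Ker" "S - H = S' - H"
      moreover have "sym_diff S S' \<subseteq> H"
        using \<open>S - H = S' - H\<close> by blast
      ultimately show "S = S'"
        using eq_if[of S S'] by (simp add: Ker_def)
    qed
    show "(\<lambda>S. S - H) ` Ker \<subseteq> Pow (V - H)"
      by (auto simp: Ker_def)
  qed (use assms(1) in simp)
  finally show "card (f ` Pow V) \<le> 2 ^ card H"
    using assms(1,3) by (simp add: card_Pow)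
qed

locale generic_cayley_graph = cayley_graph +
  assumes M_generic: "f2sum r M \<noteq> f2zero r"
begin

lemma ex_odd_coordinate: "\<exists>j<r. f2sum r M ! j"
  using ex_nth_if_nonzero[OF length_f2sum M_generic] M_nonzero_vecs by auto

definition odd_coord :: nat where
  "odd_coord = (SOME j. j < r \<and> f2sum r M ! j)"

lemma odd_coord: "odd_coord < r" "f2sum r M ! odd_coord"
  using someI_ex[OF ex_odd_coordinate] unfolding odd_coord_def by auto

lemma odd_card_odd_coord: "odd (card {i. i < n \<and> M ! i ! odd_coord})"
proof -
  have "{..<n} \<inter> {i. M ! i ! odd_coord} = {i. i < n \<and> M ! i ! odd_coord}"
    by auto
  then show ?thesis
    using f2sum_nth[of M r odd_coord] odd_coord M_nonzero_vecs by auto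
qed

definition hyperplane :: "bool list set" where
  "hyperplane = {u \<in> f2vecs r. \<not> u ! odd_coord}"

lemma card_hyperplane: "card hyperplane = 2 ^ (r - 1)" "card (f2vecs r - hyperplane) = 2 ^ (r - 1)"
proof -
  have "bij_betw (\<lambda>u. f2add u (unit_vec r odd_coord)) hyperplane (f2vecs r - hyperplane)"
    by (rule bij_betw_byWitness[where f' = "\<lambda>u. f2add u (unit_vec r odd_coord)"])
      (use odd_coord in \<open>auto simp: hyperplane_def f2add_cancel_right unit_vec_def\<close>)
  then have "card hyperplane = card (f2vecs r - hyperplane)"
    by (rule bij_betw_same_card)
  moreover have "hyperplane \<subseteq> f2vecs r"
    by (auto simp: hyperplane_def)
  then have "card hyperplane + card (f2vecs r - hyperplane) = 2 ^ r"
    using card_f2vecs[of r] card_Diff_subset[OF finite_subset[OF _ finite_f2vecs]]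
      card_mono[of "f2vecs r" hyperplane] by simp
  moreover have "(2::nat) ^ r = 2 * 2 ^ (r - 1)"
    using odd_coord(1) by (cases r) auto
  ultimately show "card hyperplane = 2 ^ (r - 1)" "card (f2vecs r - hyperplane) = 2 ^ (r - 1)"
    by auto
qed

lemma even_card_row_off_hyperplane:
  assumes "S \<subseteq> hyperplane" "laplace_mod2 S = {}" "u \<in> f2vecs r" "u ! odd_coord"
  shows "even (card {k. k < n \<and> M ! k ! odd_coord \<and> f2add u (M ! k) \<in> S})"
proof -
  have "u \<notin> S"
    using assms(1,4) by (auto simp: hyperplane_def)
  then have "even (card {k. k < n \<and> f2add u (M ! k) \<in> S})"
    using in_laplace_mod2_iff[OF assms(3)] assms(2) by auto
  moreover have "M ! k ! odd_coord" if "k < n" "f2add u (M ! k) \<in> S" for k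
    using that assms(1,3,4) length_M_nth[of k] odd_coord(1) by (auto simp: hyperplane_def)
  then have "{k. k < n \<and> M ! k ! odd_coord \<and> f2add u (M ! k) \<in> S} = {k. k < n \<and> f2add u (M ! k) \<in> S}"
    by blast
  ultimately show ?thesis
    by simp
qed

text \<open>Double counting: for \<open>z \<in> S\<close>, count the pairs \<open>(i, k) \<in> J\<^sup>2\<close> with
  \<open>z + v\<^sub>i + v\<^sub>k \<in> S\<close>, where \<open>J = {i. v\<^sub>i(j) = 1}\<close> has odd size. Each row count is
  even since \<open>z + v\<^sub>i\<close> lies off the hyperplane; the count is symmetric, so its parity is
  that of the diagonal, which is \<open>|J|\<close>.\<close>

lemma laplace_mod2_kernel_hyperplane:
  assumes "S \<subseteq> hyperplane" "laplace_mod2 S = {}"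
  shows "S = {}"
proof (rule ccontr)
  assume "S \<noteq> {}"
  then obtain z where z: "z \<in> S" by auto
  then have z_len: "length z = r" and z_coord: "\<not> z ! odd_coord"
    using assms(1) by (auto simp: hyperplane_def)
  define J where "J = {i. i < n \<and> M ! i ! odd_coord}"
  define f where "f i k = (of_bool (f2add (f2add z (M ! i)) (M ! k) \<in> S) :: int)" for i k
  have finite_J: "finite J"
    by (simp add: J_def)
  have row_even: "even (\<Sum>k\<in>J. f i k)" if "i \<in> J" for i
  proof -
    have "f2add z (M ! i) \<in> f2vecs r" "f2add z (M ! i) ! odd_coord"
      using that z_len z_coord odd_coord length_M_nth by (auto simp: J_def)
    then have "even (card {k. k < n \<and> M ! k ! odd_coord \<and> f2add (f2add z (M ! i)) (M ! k) \<in> S})"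
      by (rule even_card_row_off_hyperplane[OF assms])
    moreover have "J \<inter> {k. f2add (f2add z (M ! i)) (M ! k) \<in> S}
        = {k. k < n \<and> M ! k ! odd_coord \<and> f2add (f2add z (M ! i)) (M ! k) \<in> S}"
      by (auto simp: J_def)
    ultimately show ?thesis
      using finite_J by (simp add: f_def)
  qed
  have "even (\<Sum>i\<in>J. \<Sum>k\<in>J. f i k)"
    by (rule dvd_sum) (rule row_even)
  moreover have "even ((\<Sum>i\<in>J. \<Sum>k\<in>J. f i k) - (\<Sum>i\<in>J. f i i))"
  proof (rule even_double_sum_minus_diagonal[OF finite_J])
    fix i k assume "i \<in> J" "k \<in> J"
    then show "f i k = f k i"
      using f2add_right_commute[of z r "M ! i" "M ! k"] z_len length_M_nth by (simp add: f_def J_def)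
  qed
  moreover have "(\<Sum>i\<in>J. f i i) = int (card J)"
    using z z_len length_M_nth by (simp add: f_def J_def f2add_cancel_right)
  ultimately have "even (card J)"
    by simp
  then show False
    using odd_card_odd_coord unfolding J_def by simp
qed

lemma card_laplace_mod2_image: "card (laplace_mod2 ` Pow (f2vecs r)) = 2 ^ 2 ^ (r - 1)"
proof -
  have "card (laplace_mod2 ` Pow (f2vecs r)) = 2 ^ card hyperplane"
  proof (rule card_image_square_zero)
    show "hyperplane \<subseteq> f2vecs r" "card hyperplane = card (f2vecs r - hyperplane)"
      using card_hyperplane by (auto simp: hyperplane_def)
  qed (simp_all add: laplace_mod2_sym_diff laplace_mod2_subset laplace_mod2_square_zero
      laplace_mod2_kernel_hyperplane)
  then show ?thesis
    by (simp add: card_hyperplane)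
qed

end

theorem mainTheorem1:
  fixes r :: nat and M :: "bool list list"
  assumes "r \<ge> 1"
    and "\<forall>v \<in> set M. v \<in> f2vecs r \<and> v \<noteq> f2zero r"
    and "f2generates r M"
    and "f2sum r M \<noteq> f2zero r"
  shows "finite (carrier (mod_two (sandpile_group r M)))
         \<and> card (carrier (mod_two (sandpile_group r M))) = 2 ^ (2 ^ (r - 1) - 1)"
proof -
  interpret connected_cayley_graph r M
    using assms(2,3) by unfold_locales
  interpret generic_cayley_graph r M
    using assms(4) by unfold_locales
  have K: "sandpile_group r M = torsion_part (free_ab (f2vecs r) Mod laplace ` carrier (free_ab (f2vecs r)))"
    by (simp add: sandpile_group_def coker_def mat_image_cayley_laplacian)
  have "card (odd_support ` laplace ` carrier (free_ab (f2vecs r))) = 2 ^ 2 ^ (r - 1)"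
    by (simp add: odd_support_laplace_image card_laplace_mod2_image)
  moreover have "(2::nat) ^ (card (f2vecs r) - 1) = 2 ^ (2 ^ (r - 1) - 1) * 2 ^ 2 ^ (r - 1)"
  proof -
    have "(2::nat) ^ r = 2 * 2 ^ (r - 1)"
      using assms(1) by (cases r) simp_all
    then have "card (f2vecs r) - 1 = (2 ^ (r - 1) - 1) + 2 ^ (r - 1)"
      using one_le_power[of "2::nat" "r - 1"] by (simp only: card_f2vecs)
    then show ?thesis
      by (simp only: power_add)
  qed
  ultimately show ?thesis
    using card_mod_two K by simp
qed

end
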